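(* Let $H_0,H_1$ be complex Hilbert spaces, $G$ a densely defined closed operator from $H_0$ into $H_1$ and $D$ a densely defined closed operator from $H_1$ into $H_0$ with $-G^*\subset D$. Let $m\in\mathcal L(H_0)$ (not necessarily coercive) and let $a\in\mathcal L(H_1)$ be coercive. Let $T\in\mathcal L(\mathrm{dom}(G))$ be defined by $(Tu,v)_{\mathrm{dom}(G)}=(aGu,Gv)_{H_1}+(mu,v)_{H_0}$ for all $u,v\in\mathrm{dom}(G)$, and assume $\mathrm{ran}(T)$ is closed in $\mathrm{dom}(G)$. Then the Dirichlet-to-Neumann graph $\Lambda$ associated with $-DaG+m$ satisfies \[ \mathrm{dom}(\Lambda^{-1})=\{q_0\in\mathrm{BD}(D):(Dq_0,\pi_{\mathrm{BD}(G)}v)_{\mathrm{BD}(G)}=0\text{ for all }v\in\ker(m^*-\mathring Da^*G)\}. \]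
   Context: $\mathring D=-G^*$, $\mathring G=-D^*$. Domains carry graph inner products, e.g. $(u,v)_{\mathrm{dom}(G)}=(u,v)_{H_0}+(Gu,Gv)_{H_1}$. $\mathrm{BD}(G)$ (resp. $\mathrm{BD}(D)$) is the orthogonal complement of $\mathrm{dom}(\mathring G)$ in $\mathrm{dom}(G)$ (resp. of $\mathrm{dom}(\mathring D)$ in $\mathrm{dom}(D)$) with induced inner products; $\pi_{\mathrm{BD}(G)},\pi_{\mathrm{BD}(D)}$ the orthogonal projections. $D$ maps $\mathrm{BD}(D)$ into $\mathrm{BD}(G)$. Coercive: $\mathrm{Re}(ax,x)\ge\mu\|x\|^2$ for some $\mu>0$. The Dirichlet-to-Neumann graph is $\Lambda=\{(\pi_{\mathrm{BD}(G)}u,\pi_{\mathrm{BD}(D)}aGu): u\in\mathrm{dom}(G),\ aGu\in\mathrm{dom}(D),\ mu-DaGu=0\}$; its inverse graph is $\Lambda^{-1}=\{(q,p):(p,q)\in\Lambda\}$ and $\mathrm{dom}(\Lambda^{-1})$ the set of its first components. $\ker(m^*-\mathring Da^*G)=\{v\in\mathrm{dom}(G):a^*Gv\in\mathrm{dom}(\mathring D),\ m^*v=\mathring Da^*Gv\}$. *)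

theory Defs
  imports "HOL-Analysis.Analysis"
begin

class chilbert = banach +
  fixes scaleC :: "complex \<Rightarrow> 'a \<Rightarrow> 'a"
    and cinner :: "'a \<Rightarrow> 'a \<Rightarrow> complex"
  assumes scaleC_of_real: "scaleC (complex_of_real r) x = scaleR r x"
    and scaleC_add_right: "scaleC c (x + y) = scaleC c x + scaleC c y"
    and scaleC_add_left: "scaleC (c + d) x = scaleC c x + scaleC d x"
    and scaleC_scaleC: "scaleC c (scaleC d x) = scaleC (c * d) x"
    and scaleC_one: "scaleC 1 x = x"
    and cinner_add_left: "cinner (x + y) z = cinner x z + cinner y z"
    and cinner_scaleC_left: "cinner (scaleC c x) y = c * cinner x y"
    and cinner_commute: "cinner y x = cnj (cinner x y)"
    and cinner_self_real: "Im (cinner x x) = 0"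
    and cinner_self_nonneg: "0 \<le> Re (cinner x x)"
    and cinner_self_eq_0: "cinner x x = 0 \<longleftrightarrow> x = 0"
    and norm_eq_sqrt_cinner: "norm x = sqrt (Re (cinner x x))"

definition cbounded_linear :: "('a::chilbert \<Rightarrow> 'b::chilbert) \<Rightarrow> bool" where
  "cbounded_linear f \<longleftrightarrow>
     (\<forall>x y. f (x + y) = f x + f y) \<and> (\<forall>c x. f (scaleC c x) = scaleC c (f x)) \<and>
     (\<exists>K. \<forall>x. norm (f x) \<le> K * norm x)"

definition badj :: "('a::chilbert \<Rightarrow> 'b::chilbert) \<Rightarrow> 'b \<Rightarrow> 'a" where
  "badj f y = (THE z. \<forall>x. cinner (f x) y = cinner x z)"

definition coercive :: "('a::chilbert \<Rightarrow> 'a) \<Rightarrow> bool" where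
  "coercive a \<longleftrightarrow> (\<exists>\<mu>>0. \<forall>x. Re (cinner (a x) x) \<ge> \<mu> * (norm x)\<^sup>2)"

section \<open>Unbounded operators, represented by their graphs\<close>

definition linear_operator :: "('a::chilbert \<times> 'b::chilbert) set \<Rightarrow> bool" where
  "linear_operator A \<longleftrightarrow>
     (0, 0) \<in> A \<and>
     (\<forall>p\<in>A. \<forall>q\<in>A. p + q \<in> A) \<and>
     (\<forall>c. \<forall>(x, y)\<in>A. (scaleC c x, scaleC c y) \<in> A) \<and>
     (\<forall>y. (0, y) \<in> A \<longrightarrow> y = 0)"

definition densely_defined_closed :: "('a::chilbert \<times> 'b::chilbert) set \<Rightarrow> bool" where
  "densely_defined_closed A \<longleftrightarrow>
     linear_operator A \<and> closure (Domain A) = UNIV \<and> closed A"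

definition opap :: "('a \<times> 'b) set \<Rightarrow> 'a \<Rightarrow> 'b" where
  "opap A x = (THE y. (x, y) \<in> A)"

definition adj :: "('a::chilbert \<times> 'b::chilbert) set \<Rightarrow> ('b \<times> 'a) set" where
  "adj A = {(y, z). \<forall>(x, w)\<in>A. cinner w y = cinner x z}"

definition opneg :: "('a \<times> 'b::uminus) set \<Rightarrow> ('a \<times> 'b) set" where
  "opneg A = {(x, - y) | x y. (x, y) \<in> A}"

text \<open>\<open>\<mathring>D = -G\<^sup>*\<close>, \<open>\<mathring>G = -D\<^sup>*\<close>.\<close>
definition ring_op :: "('a::chilbert \<times> 'b::chilbert) set \<Rightarrow> ('b \<times> 'a) set" where
  "ring_op A = opneg (adj A)"

definition gip :: "('a::chilbert \<times> 'b::chilbert) set \<Rightarrow> 'a \<Rightarrow> 'a \<Rightarrow> complex" where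
  "gip A u v = cinner u v + cinner (opap A u) (opap A v)"

definition gnorm :: "('a::chilbert \<times> 'b::chilbert) set \<Rightarrow> 'a \<Rightarrow> real" where
  "gnorm A u = sqrt ((norm u)\<^sup>2 + (norm (opap A u))\<^sup>2)"

text \<open>\<open>BD(A)\<close>: orthogonal complement of \<open>dom(A0)\<close> in \<open>dom(A)\<close> w.r.t. the graph inner
product of \<open>A\<close>, where \<open>A0\<close> is the restricted operator (\<open>\<mathring>G\<close> for \<open>G\<close>, \<open>\<mathring>D\<close> for \<open>D\<close>).\<close>
definition BD :: "('a::chilbert \<times> 'b::chilbert) set \<Rightarrow> ('a \<times> 'b) set \<Rightarrow> 'a set" where
  "BD A A0 = {u \<in> Domain A. \<forall>w\<in>Domain A0. gip A u w = 0}"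

definition piBD :: "('a::chilbert \<times> 'b::chilbert) set \<Rightarrow> ('a \<times> 'b) set \<Rightarrow> 'a \<Rightarrow> 'a" where
  "piBD A A0 u = (THE p. p \<in> BD A A0 \<and> u - p \<in> Domain A0)"

definition DtN ::
  "('a::chilbert \<times> 'b::chilbert) set \<Rightarrow> ('b \<times> 'a) set \<Rightarrow> ('b \<Rightarrow> 'b) \<Rightarrow> ('a \<Rightarrow> 'a)
     \<Rightarrow> ('a \<times> 'b) set" where
  "DtN G D a m =
     {(piBD G (ring_op D) u, piBD D (ring_op G) (a (opap G u))) | u.
        u \<in> Domain G \<and> a (opap G u) \<in> Domain D \<and> m u - opap D (a (opap G u)) = 0}"

definition converse_graph :: "('a \<times> 'b) set \<Rightarrow> ('b \<times> 'a) set" where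
  "converse_graph L = {(q, p). (p, q) \<in> L}"

definition ker_adj ::
  "('a::chilbert \<times> 'b::chilbert) set \<Rightarrow> ('b \<times> 'a) set \<Rightarrow> ('b \<Rightarrow> 'b) \<Rightarrow> ('a \<Rightarrow> 'a) \<Rightarrow> 'a set" where
  "ker_adj G D a m =
     {v \<in> Domain G. badj a (opap G v) \<in> Domain (ring_op G) \<and>
        badj m v = opap (ring_op G) (badj a (opap G v))}"

end

theory Submission
  imports Defs
begin

(* Write D0 = ring_op G for the restriction of D. A boundary value q lies in dom(Lambda^-1)
   iff q = pi_BD(D) (a G u) for some u with m u = D a G u. Splitting a G u = q + r with
   r in dom(D0) and using Green's formula (D q, v)_dom(G) = (D q, v) + (q, G v) for q in BD(D),
   this says exactly that D q = T u; so dom(Lambda^-1) = {q in BD(D). D q in ran T}.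
   Moving a and m to the other side of the form identifies the orthogonal complement of ran T
   in dom(G) with ker(m^* - D0 a^* G); as ran T is closed, it is in turn the orthogonal
   complement of that kernel. Finally D q lies in BD(G), so pairing it with v or with
   pi_BD(G) v gives the same value. *)

section \<open>Complex Hilbert spaces\<close>

lemma cinner_zero_left [simp]: "cinner 0 (y::'a::chilbert) = 0"
  using cinner_add_left[of "0::'a" 0 y] by simp

lemma cinner_zero_right [simp]: "cinner (x::'a::chilbert) 0 = 0"
  by (metis cinner_commute cinner_zero_left complex_cnj_zero)

lemma cinner_add_right: "cinner (x::'a::chilbert) (y + z) = cinner x y + cinner x z"
  by (metis cinner_add_left cinner_commute complex_cnj_add)

lemma cinner_scaleC_right: "cinner (x::'a::chilbert) (scaleC c y) = cnj c * cinner x y"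
  by (metis cinner_commute cinner_scaleC_left complex_cnj_mult)

lemma cinner_minus_left: "cinner (- x::'a::chilbert) y = - cinner x y"
  using cinner_add_left[of x "-x" y] by (simp add: add_eq_0_iff2)

lemma cinner_minus_right: "cinner (x::'a::chilbert) (- y) = - cinner x y"
  by (metis cinner_commute cinner_minus_left complex_cnj_minus)

lemma cinner_diff_left: "cinner (x - z::'a::chilbert) y = cinner x y - cinner z y"
  using cinner_add_left[of x "-z" y] by (simp add: cinner_minus_left)

lemma cinner_diff_right: "cinner (x::'a::chilbert) (y - z) = cinner x y - cinner x z"
  using cinner_add_right[of x y "-z"] by (simp add: cinner_minus_right)

lemma cinner_self_norm: "cinner (x::'a::chilbert) x = complex_of_real ((norm x)\<^sup>2)"
  using cinner_self_real[of x] cinner_self_nonneg[of x] norm_eq_sqrt_cinner[of x]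
  by (simp add: complex_eq_iff)

lemma scaleC_minus1_left: "scaleC (-1) (x::'a::chilbert) = - x"
  using scaleC_of_real[of "-1" x] by simp

lemma norm_diff_scaleC_power2:
  fixes y t :: "'a::chilbert"
  shows "(norm (y - scaleC c t))\<^sup>2 =
    (norm y)\<^sup>2 - 2 * Re (cnj c * cinner y t) + (cmod c)\<^sup>2 * (norm t)\<^sup>2"
proof -
  have "cinner (y - scaleC c t) (y - scaleC c t) =
      cinner y y - (cnj c * cinner y t + cnj (cnj c * cinner y t)) + c * cnj c * cinner t t"
    by (simp add: cinner_diff_left cinner_diff_right cinner_scaleC_left cinner_scaleC_right
        cinner_commute[of t y] algebra_simps)
  hence "Re (cinner (y - scaleC c t) (y - scaleC c t)) =
      Re (cinner y y) - 2 * Re (cnj c * cinner y t) + Re (c * cnj c) * Re (cinner t t)"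
    by (simp add: complex_add_cnj cinner_self_norm flip: complex_norm_square)
  thus ?thesis
    by (simp add: cinner_self_norm flip: complex_norm_square)
qed

lemma cinner_Cauchy_Schwarz: "cmod (cinner x y) \<le> norm x * norm (y::'a::chilbert)"
proof (cases "y = 0")
  case False
  define A where "A = cinner x y"
  define N where "N = (norm y)\<^sup>2"
  have N: "N > 0" using False by (simp add: N_def)
  have "0 \<le> (norm (x - scaleC (A / N) y))\<^sup>2" by simp
  also have "\<dots> = (norm x)\<^sup>2 - (cmod A)\<^sup>2 / N"
    unfolding norm_diff_scaleC_power2 A_def[symmetric] N_def[symmetric] using N
    by (simp add: norm_divide power_divide complex_norm_square[symmetric] power2_eq_square
        field_simps)
  finally have "(cmod A)\<^sup>2 \<le> (norm x * norm y)\<^sup>2"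
    using N by (simp add: N_def power_mult_distrib field_simps)
  thus ?thesis unfolding A_def by (simp add: power2_le_iff_abs_le)
qed simp

lemma bounded_bilinear_cinner: "bounded_bilinear (cinner :: 'a::chilbert \<Rightarrow> 'a \<Rightarrow> complex)"
proof
  fix x x' y y' :: 'a and r :: real
  show "cinner (x + x') y = cinner x y + cinner x' y" by (rule cinner_add_left)
  show "cinner x (y + y') = cinner x y + cinner x y'" by (rule cinner_add_right)
  show "cinner (r *\<^sub>R x) y = r *\<^sub>R cinner x y"
    by (simp add: cinner_scaleC_left scaleR_conv_of_real flip: scaleC_of_real)
  show "cinner x (r *\<^sub>R y) = r *\<^sub>R cinner x y"
    by (simp add: cinner_scaleC_right scaleR_conv_of_real flip: scaleC_of_real)
  show "\<exists>K. \<forall>x y. cmod (cinner x y) \<le> norm x * norm (y::'a) * K"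
    by (rule exI[of _ 1]) (simp add: cinner_Cauchy_Schwarz)
qed

lemma cinner_eq_all_right: "(\<And>x. cinner x z = cinner x z') \<Longrightarrow> (z::'a::chilbert) = z'"
  by (metis cinner_diff_right cinner_self_eq_0 diff_self eq_iff_diff_eq_0)

lemma cbounded_linear_bounded_linear: "cbounded_linear f \<Longrightarrow> bounded_linear f"
  unfolding cbounded_linear_def
  by (elim conjE exE, rule_tac K = K in bounded_linear_intro)
    (auto simp: mult.commute simp flip: scaleC_of_real)

lemma parallelogram_law:
  "(norm (x + y::'a::chilbert))\<^sup>2 + (norm (x - y))\<^sup>2 = 2 * (norm x)\<^sup>2 + 2 * (norm y)\<^sup>2"
  using cinner_self_norm[of "x + y"] cinner_self_norm[of "x - y"] cinner_self_norm[of x]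
    cinner_self_norm[of y]
  by (simp add: cinner_add_left cinner_add_right cinner_diff_left cinner_diff_right complex_eq_iff)

definition csubspace :: "'a::chilbert set \<Rightarrow> bool" where
  "csubspace S \<longleftrightarrow> 0 \<in> S \<and> (\<forall>u\<in>S. \<forall>v\<in>S. u + v \<in> S) \<and> (\<forall>c. \<forall>u\<in>S. scaleC c u \<in> S)"

lemma csubspace_diff: "csubspace S \<Longrightarrow> u \<in> S \<Longrightarrow> v \<in> S \<Longrightarrow> u - v \<in> S"
  unfolding csubspace_def by (metis diff_conv_add_uminus scaleC_minus1_left)

lemma csubspace_add: "csubspace S \<Longrightarrow> u \<in> S \<Longrightarrow> v \<in> S \<Longrightarrow> u + v \<in> S"
  unfolding csubspace_def by blast

lemma csubspace_convex: "csubspace S \<Longrightarrow> convex S"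
  unfolding csubspace_def convex_def by (metis scaleC_of_real)

lemma nearest_point_exists:
  fixes S :: "'a::chilbert set"
  assumes S: "closed S" "convex S" "S \<noteq> {}"
  shows "\<exists>p\<in>S. \<forall>t\<in>S. norm (x - p) \<le> norm (x - t)"
proof -
  define d where "d = Inf ((\<lambda>t. norm (x - t)) ` S)"
  have bdd: "bdd_below ((\<lambda>t. norm (x - t)) ` S)" by (rule bdd_belowI[of _ 0]) auto
  have d_le: "d \<le> norm (x - t)" if "t \<in> S" for t
    unfolding d_def using bdd that by (rule cINF_lower)
  have "d \<in> closure ((\<lambda>t. norm (x - t)) ` S)"
    unfolding d_def using S(3) bdd by (intro closure_contains_Inf) auto
  then obtain r where r: "\<forall>n. r n \<in> (\<lambda>t. norm (x - t)) ` S" "r \<longlonglongrightarrow> d"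
    by (auto simp: closure_sequential)
  then obtain s where s: "\<And>n. s n \<in> S" "\<And>n. r n = norm (x - s n)"
    unfolding image_iff Bex_def by metis
  have lim: "(\<lambda>n. norm (x - s n)) \<longlonglongrightarrow> d" using r(2) by (simp add: s(2)[symmetric])
  have d0: "0 \<le> d" unfolding d_def using S(3) by (intro cINF_greatest) auto
  have diam: "(norm (s n - s k))\<^sup>2 \<le> 2 * (norm (x - s n))\<^sup>2 + 2 * (norm (x - s k))\<^sup>2 - 4 * d\<^sup>2"
    for n k
  proof -
    define mid where "mid = (1/2) *\<^sub>R s n + (1/2) *\<^sub>R s k"
    have "mid \<in> S" unfolding mid_def by (rule convexD[OF S(2) s(1) s(1)]) auto
    hence "d\<^sup>2 \<le> (norm (x - mid))\<^sup>2" using d_le d0 by (simp add: power_mono)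
    moreover have "(x - s n) + (x - s k) = 2 *\<^sub>R (x - mid)"
      by (simp add: mid_def algebra_simps scaleR_2)
    ultimately show ?thesis
      using parallelogram_law[of "x - s n" "x - s k"]
      by (simp add: power_mult_distrib norm_minus_commute)
  qed
  have "Cauchy s"
  proof (rule metric_CauchyI)
    fix e :: real assume e: "0 < e"
    have "(\<lambda>n. (norm (x - s n))\<^sup>2 - d\<^sup>2) \<longlonglongrightarrow> d\<^sup>2 - d\<^sup>2" using lim by (intro tendsto_intros)
    hence "\<forall>\<^sub>F n in sequentially. (norm (x - s n))\<^sup>2 - d\<^sup>2 < e\<^sup>2 / 4"
      using e by (intro order_tendstoD) auto
    then obtain N where N: "\<And>n. N \<le> n \<Longrightarrow> (norm (x - s n))\<^sup>2 - d\<^sup>2 < e\<^sup>2 / 4"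
      by (auto simp: eventually_sequentially)
    show "\<exists>M. \<forall>m\<ge>M. \<forall>n\<ge>M. dist (s m) (s n) < e"
    proof (intro exI allI impI)
      fix m n assume "N \<le> m" "N \<le> n"
      with N[of m] N[of n] diam[of m n] have "(dist (s m) (s n))\<^sup>2 < e\<^sup>2"
        by (simp add: dist_norm)
      thus "dist (s m) (s n) < e" using e by (simp add: power_less_imp_less_base)
    qed
  qed
  then obtain p where p: "s \<longlonglongrightarrow> p" by (metis Cauchy_convergent convergent_def)
  have "(\<lambda>n. norm (x - s n)) \<longlonglongrightarrow> norm (x - p)" using p by (intro tendsto_intros)
  hence "norm (x - p) = d" using lim by (rule LIMSEQ_unique)
  thus ?thesis using closed_sequentially[OF S(1) s(1) p] d_le by auto
qed

lemma cinner_eq_0_of_norm_le_diff_scaleC: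
  fixes y t :: "'a::chilbert"
  assumes min: "\<And>c. norm y \<le> norm (y - scaleC c t)"
  shows "cinner y t = 0"
proof -
  define A where "A = cinner y t"
  \<comment> \<open>test the minimality with \<open>c = r * A\<close>, where \<open>r > 0\<close> is small\<close>
  define r where "r = 1 / ((norm t)\<^sup>2 + 1)"
  have "0 < (norm t)\<^sup>2 + 1" by (intro add_nonneg_pos) simp_all
  hence r: "0 < r" "r * (norm t)\<^sup>2 < 1" by (auto simp: r_def field_simps)
  have "cnj (complex_of_real r * A) * A = complex_of_real r * (A * cnj A)" by (simp add: mult_ac)
  also have "\<dots> = complex_of_real (r * (cmod A)\<^sup>2)"
    by (simp only: complex_norm_square[symmetric] of_real_mult)
  finally have "Re (cnj (complex_of_real r * A) * A) = r * (cmod A)\<^sup>2"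
    by (simp only: Re_complex_of_real)
  hence "(norm (y - scaleC (of_real r * A) t))\<^sup>2 =
      (norm y)\<^sup>2 - (cmod A)\<^sup>2 * (r * (2 - r * (norm t)\<^sup>2))"
    unfolding norm_diff_scaleC_power2 A_def[symmetric] using r(1)
    by (simp add: norm_mult power_mult_distrib algebra_simps power2_eq_square)
  moreover have "(norm y)\<^sup>2 \<le> (norm (y - scaleC (of_real r * A) t))\<^sup>2"
    using min by (simp add: power_mono)
  moreover have "0 < r * (2 - r * (norm t)\<^sup>2)" using r by simp
  ultimately show ?thesis using r by (auto simp: A_def mult_le_0_iff)
qed

lemma orthogonal_projection_exists:
  fixes S :: "'a::chilbert set"
  assumes "closed S" "csubspace S"
  shows "\<exists>p\<in>S. \<forall>t\<in>S. cinner (x - p) t = 0"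
proof -
  have "S \<noteq> {}" using assms(2) by (auto simp: csubspace_def)
  then obtain p where p: "p \<in> S" and min: "\<And>t. t \<in> S \<Longrightarrow> norm (x - p) \<le> norm (x - t)"
    using nearest_point_exists[OF assms(1) csubspace_convex[OF assms(2)]] by blast
  have "cinner (x - p) t = 0" if "t \<in> S" for t
  proof (rule cinner_eq_0_of_norm_le_diff_scaleC)
    fix c
    have "p + scaleC c t \<in> S" using assms(2) p that by (simp add: csubspace_def)
    thus "norm (x - p) \<le> norm (x - p - scaleC c t)" using min by (simp add: diff_diff_eq)
  qed
  thus ?thesis using p by blast
qed

lemma Riesz_representation:
  fixes \<phi> :: "'a::chilbert \<Rightarrow> complex"
  assumes add: "\<And>x y. \<phi> (x + y) = \<phi> x + \<phi> y" and scale: "\<And>c x. \<phi> (scaleC c x) = c * \<phi> x"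
    and cont: "continuous_on UNIV \<phi>"
  shows "\<exists>z. \<forall>x. \<phi> x = cinner x z"
proof (cases "\<forall>x. \<phi> x = 0")
  case False
  then obtain x0 where x0: "\<phi> x0 \<noteq> 0" by blast
  have diff: "\<phi> (x - y) = \<phi> x - \<phi> y" for x y using add[of "x - y" y] by simp
  define K where "K = {x. \<phi> x = 0}"
  have "closed K" unfolding K_def using cont by (intro closed_Collect_eq) auto
  moreover have "csubspace K"
    using add scale diff[of 0 0] by (simp add: csubspace_def K_def)
  ultimately obtain p where p: "p \<in> K" and orth: "\<And>t. t \<in> K \<Longrightarrow> cinner (x0 - p) t = 0"
    using orthogonal_projection_exists by blast
  define w where "w = x0 - p"
  have w: "\<phi> w \<noteq> 0" using x0 p by (simp add: w_def diff K_def)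
  hence "w \<noteq> 0" using diff[of 0 0] by auto
  hence ww: "cinner w w \<noteq> 0" by (simp add: cinner_self_eq_0)
  show ?thesis
  proof (intro exI allI)
    fix x
    have "x - scaleC (\<phi> x / \<phi> w) w \<in> K" using w by (simp add: K_def diff scale)
    hence "cinner (x - scaleC (\<phi> x / \<phi> w) w) w = 0"
      using orth[folded w_def] by (metis cinner_commute complex_cnj_zero)
    hence "\<phi> x = \<phi> w * cinner x w / cinner w w"
      using w ww by (simp add: cinner_diff_left cinner_scaleC_left field_simps)
    thus "\<phi> x = cinner x (scaleC (cnj (\<phi> w / cinner w w)) w)"
      by (simp add: cinner_scaleC_right field_simps)
  qed
qed (metis cinner_zero_right)

lemma cinner_badj:
  fixes f :: "'a::chilbert \<Rightarrow> 'b::chilbert"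
  assumes f: "cbounded_linear f"
  shows "cinner (f x) y = cinner x (badj f y)"
proof -
  have "continuous_on UNIV (\<lambda>x. cinner (f x) y)"
    using bounded_linear.continuous_on[OF cbounded_linear_bounded_linear[OF f] continuous_on_id]
    by (intro bounded_bilinear.continuous_on[OF bounded_bilinear_cinner] continuous_intros)
  then obtain z where z: "\<And>x. cinner (f x) y = cinner x z"
    using Riesz_representation[of "\<lambda>x. cinner (f x) y"] f
    by (auto simp: cbounded_linear_def cinner_add_left cinner_scaleC_left)
  have "badj f y = z"
    unfolding badj_def by (rule the_equality) (use z cinner_eq_all_right in auto)
  thus ?thesis by (simp add: z)
qed

(* Graphs of operators are subspaces of the product space; projections onto them are taken there. *)
instantiation prod :: (chilbert, chilbert) chilbert
begin

definition scaleC_prod :: "complex \<Rightarrow> 'a \<times> 'b \<Rightarrow> 'a \<times> 'b" where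
  "scaleC_prod c p = (scaleC c (fst p), scaleC c (snd p))"

definition cinner_prod :: "'a \<times> 'b \<Rightarrow> 'a \<times> 'b \<Rightarrow> complex" where
  "cinner_prod p q = cinner (fst p) (fst q) + cinner (snd p) (snd q)"

instance
proof
  fix r :: real and x y z :: "'a \<times> 'b" and c d :: complex
  show "scaleC (complex_of_real r) x = r *\<^sub>R x"
    by (simp add: scaleC_prod_def scaleC_of_real prod_eq_iff)
  show "scaleC c (x + y) = scaleC c x + scaleC c y" by (simp add: scaleC_prod_def scaleC_add_right)
  show "scaleC (c + d) x = scaleC c x + scaleC d x" by (simp add: scaleC_prod_def scaleC_add_left)
  show "scaleC c (scaleC d x) = scaleC (c * d) x" by (simp add: scaleC_prod_def scaleC_scaleC)
  show "scaleC 1 x = x" by (simp add: scaleC_prod_def scaleC_one)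
  show "cinner (x + y) z = cinner x z + cinner y z" by (simp add: cinner_prod_def cinner_add_left)
  show "cinner (scaleC c x) y = c * cinner x y"
    by (simp add: cinner_prod_def scaleC_prod_def cinner_scaleC_left algebra_simps)
  show "cinner y x = cnj (cinner x y)"
    by (simp add: cinner_prod_def cinner_commute[of "fst y"] cinner_commute[of "snd y"])
  show "Im (cinner x x) = 0" by (simp add: cinner_prod_def cinner_self_real)
  show "0 \<le> Re (cinner x x)" by (simp add: cinner_prod_def cinner_self_nonneg)
  have "cinner x x = of_real ((norm (fst x))\<^sup>2 + (norm (snd x))\<^sup>2)"
    by (simp add: cinner_prod_def cinner_self_norm)
  thus "cinner x x = 0 \<longleftrightarrow> x = 0"
    by (simp only: of_real_eq_0_iff prod_eq_iff add_nonneg_eq_0_iff zero_le_power2) simp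
  show "norm x = sqrt (Re (cinner x x))"
    by (simp add: norm_prod_def cinner_prod_def cinner_self_norm)
qed

end

lemma scaleC_Pair [simp]: "scaleC c (x, y) = (scaleC c x, scaleC c y)"
  by (simp add: scaleC_prod_def)

lemma cinner_Pair [simp]: "cinner (x, y) (x', y') = cinner x x' + cinner y y'"
  by (simp add: cinner_prod_def)

lemma csubspace_Domain:
  assumes "csubspace A" shows "csubspace (Domain A)"
  unfolding csubspace_def
proof (intro conjI ballI allI)
  show "0 \<in> Domain A" using assms by (auto simp: csubspace_def zero_prod_def)
next
  fix u v assume "u \<in> Domain A" "v \<in> Domain A"
  then obtain u' v' where "(u, u') \<in> A" "(v, v') \<in> A" by blast
  hence "(u, u') + (v, v') \<in> A" using assms unfolding csubspace_def by blast
  thus "u + v \<in> Domain A" by auto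
next
  fix c u assume "u \<in> Domain A"
  then obtain u' where "(u, u') \<in> A" by blast
  hence "scaleC c (u, u') \<in> A" using assms unfolding csubspace_def by blast
  thus "scaleC c u \<in> Domain A" by auto
qed

section \<open>Operators given by their graphs\<close>

lemma linear_operator_csubspace: "linear_operator A \<Longrightarrow> csubspace A"
  unfolding linear_operator_def csubspace_def
proof (elim conjE, intro conjI)
  assume h: "\<forall>c. \<forall>(x, y)\<in>A. (scaleC c x, scaleC c y) \<in> A"
  show "\<forall>c. \<forall>u\<in>A. scaleC c u \<in> A"
  proof (intro allI ballI)
    fix c u assume "u \<in> A" thus "scaleC c u \<in> A" using h by (cases u) auto
  qed
qed (auto simp: zero_prod_def)

lemma linear_operator_single_valued:
  assumes "linear_operator A" "(x, y) \<in> A" "(x, y') \<in> A"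
  shows "y = y'"
proof -
  have "(x, y) - (x, y') \<in> A"
    using csubspace_diff[OF linear_operator_csubspace] assms by blast
  hence "(0, y - y') \<in> A" by simp
  thus ?thesis using assms(1) unfolding linear_operator_def by (metis eq_iff_diff_eq_0)
qed

lemma opap_subgraph_eqI:
  assumes "A0 \<subseteq> A" "linear_operator A" "(x, y) \<in> A0"
  shows "opap A0 x = y"
  unfolding opap_def
  by (rule the_equality) (use assms linear_operator_single_valued in blast)+

lemma opap_subgraph_mem:
  assumes "A0 \<subseteq> A" "linear_operator A" "x \<in> Domain A0"
  shows "(x, opap A0 x) \<in> A0"
proof -
  obtain y where "(x, y) \<in> A0" using assms(3) by blast
  thus ?thesis using opap_subgraph_eqI[OF assms(1,2)] by simp
qed

lemma opap_eqI: "linear_operator A \<Longrightarrow> (x, y) \<in> A \<Longrightarrow> opap A x = y"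
  by (rule opap_subgraph_eqI) auto

lemma opap_mem: "linear_operator A \<Longrightarrow> x \<in> Domain A \<Longrightarrow> (x, opap A x) \<in> A"
  by (rule opap_subgraph_mem) auto

lemma graph_mem_opap:
  "linear_operator A \<Longrightarrow> p \<in> A \<Longrightarrow> fst p \<in> Domain A \<and> snd p = opap A (fst p)"
  by (cases p) (auto simp: opap_eqI)

lemma opap_add:
  assumes A: "linear_operator A" and "x \<in> Domain A" "y \<in> Domain A"
  shows "x + y \<in> Domain A" "opap A (x + y) = opap A x + opap A y"
proof -
  have "(x, opap A x) + (y, opap A y) \<in> A"
    using assms opap_mem[OF A] unfolding linear_operator_def by blast
  hence "(x + y, opap A x + opap A y) \<in> A" by simp
  thus "x + y \<in> Domain A" "opap A (x + y) = opap A x + opap A y" using opap_eqI[OF A] by auto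
qed

lemma opap_diff:
  assumes A: "linear_operator A" and "x \<in> Domain A" "y \<in> Domain A"
  shows "x - y \<in> Domain A" "opap A (x - y) = opap A x - opap A y"
proof -
  have "(x, opap A x) - (y, opap A y) \<in> A"
    using assms csubspace_diff[OF linear_operator_csubspace[OF A]] opap_mem[OF A] by blast
  hence "(x - y, opap A x - opap A y) \<in> A" by simp
  thus "x - y \<in> Domain A" "opap A (x - y) = opap A x - opap A y" using opap_eqI[OF A] by auto
qed

lemma opap_scaleC:
  assumes A: "linear_operator A" and "x \<in> Domain A"
  shows "scaleC c x \<in> Domain A" "opap A (scaleC c x) = scaleC c (opap A x)"
proof -
  have "(scaleC c x, scaleC c (opap A x)) \<in> A"
    using assms opap_mem[OF A] unfolding linear_operator_def by blast
  thus "scaleC c x \<in> Domain A" "opap A (scaleC c x) = scaleC c (opap A x)"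
    using opap_eqI[OF A] by auto
qed

lemma mem_adj_iff: "(y, z) \<in> adj A \<longleftrightarrow> (\<forall>x w. (x, w) \<in> A \<longrightarrow> cinner w y = cinner x z)"
  unfolding adj_def by blast

lemma mem_ring_op_iff: "(y, z) \<in> ring_op A \<longleftrightarrow> (y, - z) \<in> adj A"
  unfolding ring_op_def opneg_def by force

lemma csubspace_ring_op: "csubspace (ring_op A)"
  unfolding csubspace_def
proof (intro conjI ballI allI)
  show "0 \<in> ring_op A" by (simp add: zero_prod_def mem_ring_op_iff mem_adj_iff)
next
  fix p q assume "p \<in> ring_op A" "q \<in> ring_op A"
  thus "p + q \<in> ring_op A"
    by (cases p, cases q)
      (simp add: mem_ring_op_iff mem_adj_iff cinner_add_right cinner_minus_right cinner_diff_right)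
next
  fix c p assume "p \<in> ring_op A"
  thus "scaleC c p \<in> ring_op A"
    by (cases p) (simp add: mem_ring_op_iff mem_adj_iff cinner_scaleC_right cinner_minus_right)
qed

lemma closed_ring_op: "closed (ring_op (A::('a::chilbert \<times> 'b::chilbert) set))"
proof -
  have "ring_op A = (\<Inter>q\<in>A. {p. cinner (snd q) (fst p) = - cinner (fst q) (snd p)})"
  proof -
    have "p \<in> ring_op A \<longleftrightarrow> (\<forall>q\<in>A. cinner (snd q) (fst p) = - cinner (fst q) (snd p))" for p
      by (cases p) (auto simp: mem_ring_op_iff mem_adj_iff cinner_minus_right)
    thus ?thesis by blast
  qed
  moreover have "closed {p::'b \<times> 'a. cinner (snd q) (fst p) = - cinner (fst q) (snd p)}" for q
    by (intro closed_Collect_eq continuous_intros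
        bounded_bilinear.continuous_on[OF bounded_bilinear_cinner])
  ultimately show ?thesis by auto
qed

lemma adj_adj_subset:
  fixes G :: "('a::chilbert \<times> 'b::chilbert) set"
  assumes "linear_operator G" "closed G"
  shows "adj (adj G) \<subseteq> G"
proof
  fix q assume q: "q \<in> adj (adj G)"
  obtain p where p: "p \<in> G" and orth: "\<And>t. t \<in> G \<Longrightarrow> cinner (q - p) t = 0"
    using orthogonal_projection_exists[OF assms(2) linear_operator_csubspace[OF assms(1)]] by blast
  obtain e f where ef: "q - p = (e, f)" by (cases "q - p")
  have "(f, - e) \<in> adj G"
    unfolding mem_adj_iff
  proof (intro allI impI)
    fix x w assume "(x, w) \<in> G"
    hence "cinner e x + cinner f w = 0" using orth ef by fastforce
    hence "cnj (cinner e x + cinner f w) = 0" by simp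
    thus "cinner w f = cinner x (- e)"
      by (simp add: cinner_minus_right cinner_commute[of e] cinner_commute[of f] add_eq_0_iff)
  qed
  hence "cinner (- e) (fst q) = cinner f (snd q)"
    using q by (cases q) (simp add: mem_adj_iff)
  hence "cnj (cinner (- e) (fst q)) = cnj (cinner f (snd q))" by simp
  hence "cinner (fst q) e + cinner (snd q) f = 0"
    by (simp add: cinner_minus_left cinner_commute[of e] cinner_commute[of f] add_eq_0_iff)
  hence "cinner q (q - p) = 0" unfolding ef by (cases q) simp
  moreover have "cinner p (q - p) = 0" using orth[OF p] by (metis cinner_commute complex_cnj_zero)
  ultimately have "cinner (q - p) (q - p) = 0" by (simp add: cinner_diff_left)
  thus "q \<in> G" using p by (simp add: cinner_self_eq_0)
qed

lemma ring_op_subset: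
  fixes G :: "('a::chilbert \<times> 'b::chilbert) set"
  assumes "linear_operator G" "closed G" "opneg (adj G) \<subseteq> D"
  shows "ring_op D \<subseteq> G"
proof
  fix q assume "q \<in> ring_op D"
  then obtain x y where q: "q = (x, y)" and xy: "(x, - y) \<in> adj D"
    by (cases q) (simp add: mem_ring_op_iff)
  have "(x, y) \<in> adj (adj G)"
  proof (rule mem_adj_iff[THEN iffD2], intro allI impI)
    fix s t assume "(s, t) \<in> adj G"
    hence "(s, - t) \<in> D" using assms(3) mem_ring_op_iff[of s "- t" G] by (auto simp: ring_op_def)
    hence "cinner (- t) x = cinner s (- y)" using xy unfolding mem_adj_iff by blast
    thus "cinner t x = cinner s y" by (simp add: cinner_minus_left cinner_minus_right)
  qed
  thus "q \<in> G" using adj_adj_subset[OF assms(1,2)] q by blast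
qed

section \<open>Boundary data spaces\<close>

lemma gip_commute: "gip A u w = cnj (gip A w u)"
  by (simp add: gip_def cinner_commute[of u] cinner_commute[of "opap A u"])

lemma gip_self_eq_0: "gip A u u = 0 \<Longrightarrow> u = 0"
  using cinner_self_eq_0[of "(u, opap A u)"] by (simp add: gip_def zero_prod_def)

lemma gip_diff_left:
  "linear_operator A \<Longrightarrow> x \<in> Domain A \<Longrightarrow> y \<in> Domain A \<Longrightarrow> gip A (x - y) w = gip A x w - gip A y w"
  by (simp add: gip_def opap_diff cinner_diff_left)

lemma gip_diff_right:
  "linear_operator A \<Longrightarrow> x \<in> Domain A \<Longrightarrow> y \<in> Domain A \<Longrightarrow> gip A w (x - y) = gip A w x - gip A w y"
  by (simp add: gip_def opap_diff cinner_diff_right)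

lemma gip_eq_all_imp_eq:
  assumes "linear_operator A" "x \<in> Domain A" "y \<in> Domain A"
    and "\<And>v. v \<in> Domain A \<Longrightarrow> gip A x v = gip A y v"
  shows "x = y"
proof -
  have "x - y \<in> Domain A" using opap_diff[OF assms(1-3)] by simp
  hence "gip A (x - y) (x - y) = 0" using assms by (simp add: gip_diff_left)
  thus ?thesis using gip_self_eq_0 by force
qed

locale closed_restriction =
  fixes A :: "('a::chilbert \<times> 'b::chilbert) set" and A0 :: "('a \<times> 'b) set"
  assumes linear: "linear_operator A" and subset: "A0 \<subseteq> A"
    and closed: "closed A0" and csubspace: "csubspace A0"
begin

lemma BD_decomposition_unique:
  assumes "p \<in> BD A A0" "u - p \<in> Domain A0" "p' \<in> BD A A0" "u - p' \<in> Domain A0"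
  shows "p = p'"
proof -
  have "(u - p') - (u - p) \<in> Domain A0"
    using csubspace_diff[OF csubspace_Domain[OF csubspace] assms(4,2)] .
  hence "gip A p (p - p') = 0" "gip A p' (p - p') = 0" using assms(1,3) by (auto simp: BD_def)
  hence "gip A (p - p') (p - p') = 0" using assms(1,3) by (simp add: gip_diff_left[OF linear] BD_def)
  thus ?thesis using gip_self_eq_0 by force
qed

lemma BD_decomposition_exists:
  assumes u: "u \<in> Domain A"
  shows "\<exists>p\<in>BD A A0. u - p \<in> Domain A0"
proof -
  obtain q where q: "q \<in> A0" and orth: "\<And>t. t \<in> A0 \<Longrightarrow> cinner ((u, opap A u) - q) t = 0"
    using orthogonal_projection_exists[OF closed csubspace] by blast
  obtain w w' where w: "q = (w, w')" by (cases q)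
  have "(w, w') \<in> A" using subset q w by auto
  hence wD: "w \<in> Domain A" and w': "w' = opap A w" using opap_eqI[OF linear] by auto
  have "u - w \<in> BD A A0"
    unfolding BD_def
  proof (intro CollectI conjI ballI)
    show "u - w \<in> Domain A" using opap_diff[OF linear u wD] by simp
    fix t assume "t \<in> Domain A0"
    then obtain t' where t: "(t, t') \<in> A0" by blast
    moreover have "t' = opap A t" using t subset opap_eqI[OF linear] by blast
    ultimately have "cinner ((u, opap A u) - q) (t, opap A t) = 0" using orth by blast
    thus "gip A (u - w) t = 0" by (simp add: gip_def w w' opap_diff[OF linear u wD])
  qed
  moreover have "u - (u - w) \<in> Domain A0" using q w by auto
  ultimately show ?thesis by blast
qed

lemma piBD_mem:
  assumes "u \<in> Domain A"
  shows "piBD A A0 u \<in> BD A A0" "u - piBD A A0 u \<in> Domain A0"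
proof -
  have "\<exists>!p. p \<in> BD A A0 \<and> u - p \<in> Domain A0"
    using BD_decomposition_exists[OF assms] BD_decomposition_unique by blast
  from theI'[OF this] show "piBD A A0 u \<in> BD A A0" "u - piBD A A0 u \<in> Domain A0"
    unfolding piBD_def by auto
qed

lemma piBD_eqI: "u \<in> Domain A \<Longrightarrow> p \<in> BD A A0 \<Longrightarrow> u - p \<in> Domain A0 \<Longrightarrow> piBD A A0 u = p"
  using piBD_mem BD_decomposition_unique by blast

lemma gip_piBD_right:
  assumes "y \<in> BD A A0" "v \<in> Domain A"
  shows "gip A y (piBD A A0 v) = gip A y v"
proof -
  have "gip A y (v - piBD A A0 v) = 0" using assms piBD_mem(2)[OF assms(2)] by (simp add: BD_def)
  moreover have "piBD A A0 v \<in> Domain A" using piBD_mem(1)[OF assms(2)] by (simp add: BD_def)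
  ultimately show ?thesis using gip_diff_right[OF linear assms(2)] by simp
qed

end

lemma closed_restriction_ring_op_subset:
  assumes "linear_operator D" "opneg (adj G) \<subseteq> D"
  shows "closed_restriction D (ring_op G)"
  using assms closed_ring_op csubspace_ring_op by unfold_locales (auto simp: ring_op_def)

lemma closed_restriction_ring_op_dual:
  assumes "linear_operator G" "closed G" "opneg (adj G) \<subseteq> D"
  shows "closed_restriction G (ring_op D)"
  using assms ring_op_subset closed_ring_op csubspace_ring_op by unfold_locales auto

lemma BD_opap_mem_graph:
  assumes G: "linear_operator G" "closed G" and D: "linear_operator D"
    and GD: "opneg (adj G) \<subseteq> D" and q: "q \<in> BD D (ring_op G)"
  shows "(opap D q, q) \<in> G"
proof -
  have "(opap D q, q) \<in> adj (adj G)"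
  proof (rule mem_adj_iff[THEN iffD2], intro allI impI)
    fix s t assume "(s, t) \<in> adj G"
    hence st: "(s, - t) \<in> ring_op G" by (simp add: mem_ring_op_iff)
    hence "(s, - t) \<in> D" using GD by (auto simp: ring_op_def)
    moreover have "gip D q s = 0" using q st by (auto simp: BD_def)
    ultimately have "cinner q s = cinner (opap D q) t"
      by (simp add: gip_def opap_eqI[OF D] cinner_minus_right add_eq_0_iff)
    thus "cinner t (opap D q) = cinner s q" by (metis cinner_commute)
  qed
  thus ?thesis using adj_adj_subset[OF G] by blast
qed

lemma BD_opap_mem_BD:
  assumes G: "linear_operator G" "closed G" and D: "linear_operator D"
    and GD: "opneg (adj G) \<subseteq> D" and q: "q \<in> BD D (ring_op G)"
  shows "opap D q \<in> BD G (ring_op D)"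
  unfolding BD_def
proof (intro CollectI conjI ballI)
  have qG: "(opap D q, q) \<in> G" by (rule BD_opap_mem_graph[OF assms])
  thus "opap D q \<in> Domain G" by blast
  fix w assume "w \<in> Domain (ring_op D)"
  then obtain w' where w: "(w, w') \<in> ring_op D" by blast
  have wG: "(w, w') \<in> G" using w ring_op_subset[OF G GD] by blast
  have "(q, opap D q) \<in> D" using q opap_mem[OF D] by (auto simp: BD_def)
  hence "cinner (opap D q) w = cinner q (- w')" using w by (simp add: mem_ring_op_iff mem_adj_iff)
  thus "gip G (opap D q) w = 0"
    using opap_eqI[OF G(1) qG] opap_eqI[OF G(1) wG] by (simp add: gip_def cinner_minus_right)
qed

lemma gip_BD_opap_left:
  assumes "linear_operator G" "closed G" "linear_operator D" "opneg (adj G) \<subseteq> D"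
    and "q \<in> BD D (ring_op G)"
  shows "gip G (opap D q) v = cinner (opap D q) v + cinner q (opap G v)"
  using opap_eqI[OF assms(1) BD_opap_mem_graph[OF assms]] by (simp add: gip_def)

section \<open>The Dirichlet-to-Neumann graph\<close>

locale DtN_setting =
  fixes G :: "('h0::chilbert \<times> 'h1::chilbert) set" and D :: "('h1 \<times> 'h0) set"
    and a :: "'h1 \<Rightarrow> 'h1" and m :: "'h0 \<Rightarrow> 'h0" and T :: "'h0 \<Rightarrow> 'h0"
  assumes G_linear: "linear_operator G" and G_closed: "closed G"
    and D_linear: "linear_operator D" and G_D: "opneg (adj G) \<subseteq> D"
    and a: "cbounded_linear a" and m: "cbounded_linear m"
    and T_maps: "\<And>u. u \<in> Domain G \<Longrightarrow> T u \<in> Domain G"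
    and T_add: "\<And>u v. u \<in> Domain G \<Longrightarrow> v \<in> Domain G \<Longrightarrow> T (u + v) = T u + T v"
    and T_scaleC: "\<And>c u. u \<in> Domain G \<Longrightarrow> T (scaleC c u) = scaleC c (T u)"
    and T_form: "\<And>u v. u \<in> Domain G \<Longrightarrow> v \<in> Domain G \<Longrightarrow>
      gip G (T u) v = cinner (a (opap G u)) (opap G v) + cinner (m u) v"
begin

sublocale G_bd: closed_restriction G "ring_op D"
  by (rule closed_restriction_ring_op_dual[OF G_linear G_closed G_D])

sublocale D_bd: closed_restriction D "ring_op G"
  by (rule closed_restriction_ring_op_subset[OF D_linear G_D])

lemma ring_op_G_subset: "ring_op G \<subseteq> D"
  using G_D by (simp add: ring_op_def)

lemma gip_T_badj:
  "u \<in> Domain G \<Longrightarrow> v \<in> Domain G \<Longrightarrow>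
    gip G (T u) v = cinner (opap G u) (badj a (opap G v)) + cinner u (badj m v)"
  by (simp add: T_form cinner_badj[OF a] cinner_badj[OF m])

lemma ker_adj_iff_orthogonal_range:
  assumes z: "z \<in> Domain G"
  shows "z \<in> ker_adj G D a m \<longleftrightarrow> (\<forall>u\<in>Domain G. gip G (T u) z = 0)"
proof
  assume "z \<in> ker_adj G D a m"
  hence b: "(badj a (opap G z), badj m z) \<in> ring_op G"
    using opap_subgraph_mem[OF ring_op_G_subset D_linear] by (auto simp: ker_adj_def)
  show "\<forall>u\<in>Domain G. gip G (T u) z = 0"
  proof
    fix u assume u: "u \<in> Domain G"
    have "cinner (opap G u) (badj a (opap G z)) = cinner u (- badj m z)"
      using b opap_mem[OF G_linear u] by (simp add: mem_ring_op_iff mem_adj_iff)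
    thus "gip G (T u) z = 0" using gip_T_badj[OF u z] by (simp add: cinner_minus_right)
  qed
next
  assume orth: "\<forall>u\<in>Domain G. gip G (T u) z = 0"
  have "(badj a (opap G z), - badj m z) \<in> adj G"
  proof (rule mem_adj_iff[THEN iffD2], intro allI impI)
    fix u w assume "(u, w) \<in> G"
    hence "u \<in> Domain G" "w = opap G u" using opap_eqI[OF G_linear] by auto
    thus "cinner w (badj a (opap G z)) = cinner u (- badj m z)"
      using orth gip_T_badj[OF _ z] by (simp add: cinner_minus_right eq_neg_iff_add_eq_0)
  qed
  hence "(badj a (opap G z), badj m z) \<in> ring_op G" by (simp add: mem_ring_op_iff)
  thus "z \<in> ker_adj G D a m"
    using z opap_subgraph_eqI[OF ring_op_G_subset D_linear] by (auto simp: ker_adj_def)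
qed

lemma T_zero: "T 0 = 0"
  using T_add[of 0 0] opap_add[OF G_linear] linear_operator_csubspace[OF G_linear]
    csubspace_Domain[of G] by (simp add: csubspace_def)

lemma csubspace_range_graph: "csubspace {p \<in> G. fst p \<in> T ` Domain G}"
  unfolding csubspace_def
proof (intro conjI ballI allI)
  have "0 \<in> Domain G" using csubspace_Domain[OF linear_operator_csubspace[OF G_linear]]
    by (simp add: csubspace_def)
  thus "0 \<in> {p \<in> G. fst p \<in> T ` Domain G}"
    using G_linear T_zero by (force simp: linear_operator_def zero_prod_def)
next
  fix p q assume p: "p \<in> {p \<in> G. fst p \<in> T ` Domain G}" and q: "q \<in> {p \<in> G. fst p \<in> T ` Domain G}"
  then obtain u v where "u \<in> Domain G" "v \<in> Domain G" "fst p = T u" "fst q = T v" by auto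
  hence "fst (p + q) = T (u + v)" "u + v \<in> Domain G"
    using T_add opap_add(1)[OF G_linear] by auto
  moreover have "p + q \<in> G" using p q G_linear by (simp add: linear_operator_def)
  ultimately show "p + q \<in> {p \<in> G. fst p \<in> T ` Domain G}" by auto
next
  fix c p assume p: "p \<in> {p \<in> G. fst p \<in> T ` Domain G}"
  then obtain u where "u \<in> Domain G" "fst p = T u" by auto
  hence "fst (scaleC c p) = T (scaleC c u)" "scaleC c u \<in> Domain G"
    using T_scaleC opap_scaleC(1)[OF G_linear] by (auto simp: scaleC_prod_def)
  moreover have "scaleC c p \<in> G"
    using p linear_operator_csubspace[OF G_linear] by (simp add: csubspace_def)
  ultimately show "scaleC c p \<in> {p \<in> G. fst p \<in> T ` Domain G}" by auto
qed

lemma closed_range_graph: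
  assumes closed_range: "\<forall>x y. (\<forall>n. x n \<in> T ` Domain G) \<longrightarrow> y \<in> Domain G \<longrightarrow>
    (\<lambda>n. gnorm G (x n - y)) \<longlonglongrightarrow> 0 \<longrightarrow> y \<in> T ` Domain G"
  shows "closed {p \<in> G. fst p \<in> T ` Domain G}"
  unfolding closed_sequential_limits
proof (intro allI impI, elim conjE)
  fix X l assume X: "\<forall>n. X n \<in> {p \<in> G. fst p \<in> T ` Domain G}" and lim: "X \<longlonglongrightarrow> l"
  have l: "l \<in> G" using closed_sequentially[OF G_closed _ lim] X by blast
  have l': "fst l \<in> Domain G" "snd l = opap G (fst l)" using graph_mem_opap[OF G_linear l] by auto
  have "gnorm G (fst (X n) - fst l) = norm (X n - l)" for n
  proof -
    have "fst (X n) \<in> Domain G" "snd (X n) = opap G (fst (X n))"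
      using X graph_mem_opap[OF G_linear] by auto
    thus ?thesis using l' by (simp add: gnorm_def norm_prod_def opap_diff(2)[OF G_linear])
  qed
  moreover have "(\<lambda>n. norm (X n - l)) \<longlonglongrightarrow> 0"
    using lim by (simp add: tendsto_norm_zero_iff LIM_zero_iff)
  ultimately have "fst l \<in> T ` Domain G"
    using closed_range[rule_format, of "\<lambda>n. fst (X n)" "fst l"] X l' by simp
  thus "l \<in> {p \<in> G. fst p \<in> T ` Domain G}" using l by blast
qed

lemma range_T_iff_orthogonal_ker_adj:
  assumes closed_range: "\<forall>x y. (\<forall>n. x n \<in> T ` Domain G) \<longrightarrow> y \<in> Domain G \<longrightarrow>
    (\<lambda>n. gnorm G (x n - y)) \<longlonglongrightarrow> 0 \<longrightarrow> y \<in> T ` Domain G"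
    and x: "x \<in> Domain G"
  shows "x \<in> T ` Domain G \<longleftrightarrow> (\<forall>v\<in>ker_adj G D a m. gip G x v = 0)"
proof
  assume "x \<in> T ` Domain G"
  then obtain u where u: "u \<in> Domain G" "x = T u" by blast
  show "\<forall>v\<in>ker_adj G D a m. gip G x v = 0"
  proof
    fix v assume v: "v \<in> ker_adj G D a m"
    hence "v \<in> Domain G" by (simp add: ker_adj_def)
    thus "gip G x v = 0" using ker_adj_iff_orthogonal_range v u by blast
  qed
next
  assume orth: "\<forall>v\<in>ker_adj G D a m. gip G x v = 0"
  let ?S = "{p \<in> G. fst p \<in> T ` Domain G}"
  \<comment> \<open>the graph of \<open>G\<close> over \<open>ran T\<close>; projecting \<open>(x, G x)\<close> onto it leaves a defect
    \<open>x - T u\<close> orthogonal to \<open>ran T\<close>, i.e. in the kernel\<close>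
  obtain p where "p \<in> ?S" and perp: "\<And>t. t \<in> ?S \<Longrightarrow> cinner ((x, opap G x) - p) t = 0"
    using orthogonal_projection_exists[OF closed_range_graph[OF closed_range] csubspace_range_graph]
    by blast
  then obtain u where u: "u \<in> Domain G" and "fst p = T u" "p \<in> G" by blast
  hence pu: "p = (T u, opap G (T u))" using graph_mem_opap[OF G_linear] by (metis prod.collapse)
  have Tu: "T u \<in> Domain G" by (rule T_maps[OF u])
  have z: "x - T u \<in> Domain G" "opap G (x - T u) = opap G x - opap G (T u)"
    by (rule opap_diff[OF G_linear x Tu])+
  have "gip G (T v) (x - T u) = 0" if v: "v \<in> Domain G" for v
  proof -
    have "(T v, opap G (T v)) \<in> ?S" using opap_mem[OF G_linear T_maps[OF v]] by (simp add: imageI v)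
    hence "cinner ((x, opap G x) - p) (T v, opap G (T v)) = 0" by (rule perp)
    hence "gip G (x - T u) (T v) = 0" by (simp add: gip_def pu z(2))
    thus ?thesis using gip_commute[of G "T v" "x - T u"] by simp
  qed
  hence "x - T u \<in> ker_adj G D a m" and "gip G (T u) (x - T u) = 0"
    using ker_adj_iff_orthogonal_range[OF z(1)] u by auto
  hence "gip G (x - T u) (x - T u) = 0" using orth gip_diff_left[OF G_linear x Tu] by simp
  hence "x - T u = 0" by (rule gip_self_eq_0)
  thus "x \<in> T ` Domain G" using u by simp
qed

lemma T_eq_opap_D_of_DtN:
  assumes u: "u \<in> Domain G" and aD: "a (opap G u) \<in> Domain D"
    and mu: "m u - opap D (a (opap G u)) = 0"
  shows "T u = opap D (piBD D (ring_op G) (a (opap G u)))"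
proof -
  define q where "q = piBD D (ring_op G) (a (opap G u))"
  have q: "q \<in> BD D (ring_op G)" and "a (opap G u) - q \<in> Domain (ring_op G)"
    unfolding q_def using D_bd.piBD_mem[OF aD] by auto
  then obtain s where rs: "(a (opap G u) - q, s) \<in> ring_op G" by blast
  hence rsD: "(a (opap G u) - q, s) \<in> D" using ring_op_G_subset by blast
  have qD: "q \<in> Domain D" using q by (simp add: BD_def)
  have "m u = opap D (q + (a (opap G u) - q))" using mu by simp
  also have "\<dots> = opap D q + s"
    using opap_add(2)[OF D_linear qD DomainI[OF rsD]] opap_eqI[OF D_linear rsD] by simp
  finally have mu': "m u = opap D q + s" .
  have DqG: "opap D q \<in> Domain G"
    using BD_opap_mem_graph[OF G_linear G_closed D_linear G_D q] by blast
  show ?thesis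
    unfolding q_def[symmetric]
  proof (rule gip_eq_all_imp_eq[OF G_linear T_maps[OF u] DqG])
    fix v assume v: "v \<in> Domain G"
    have "cinner (opap G v) (a (opap G u) - q) = cinner v (- s)"
      using rs opap_mem[OF G_linear v] by (simp add: mem_ring_op_iff mem_adj_iff)
    hence "cinner (a (opap G u) - q) (opap G v) = - cinner s v"
      by (simp add: cinner_commute[of "a (opap G u) - q"] cinner_minus_right cinner_commute[of v s])
    hence "cinner (a (opap G u)) (opap G v) = cinner q (opap G v) - cinner s v"
      by (simp add: cinner_diff_left algebra_simps)
    thus "gip G (T u) v = gip G (opap D q) v"
      using T_form[OF u v] gip_BD_opap_left[OF G_linear G_closed D_linear G_D q]
      by (simp add: mu' cinner_add_left algebra_simps)
  qed
qed

lemma DtN_of_T_eq_opap_D: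
  assumes q: "q \<in> BD D (ring_op G)" and u: "u \<in> Domain G" and Tu: "T u = opap D q"
  shows "(piBD G (ring_op D) u, q) \<in> DtN G D a m"
proof -
  define r where "r = a (opap G u) - q"
  have "(r, opap D q - m u) \<in> adj G"
  proof (rule mem_adj_iff[THEN iffD2], intro allI impI)
    fix v w assume "(v, w) \<in> G"
    hence v: "v \<in> Domain G" and w: "w = opap G v" using opap_eqI[OF G_linear] by auto
    have "cinner r (opap G v) = cinner (opap D q - m u) v"
      using T_form[OF u v] gip_BD_opap_left[OF G_linear G_closed D_linear G_D q, of v]
      by (simp add: Tu r_def cinner_diff_left algebra_simps)
    thus "cinner w r = cinner v (opap D q - m u)"
      by (simp add: w cinner_commute[of "opap G v"] cinner_commute[of v])
  qed
  hence rD: "(r, m u - opap D q) \<in> ring_op G" by (simp add: mem_ring_op_iff)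
  have "(q, opap D q) \<in> D" using q opap_mem[OF D_linear] by (simp add: BD_def)
  moreover have "(r, m u - opap D q) \<in> D" using rD ring_op_G_subset by blast
  ultimately have "(r, m u - opap D q) + (q, opap D q) \<in> D"
    using csubspace_add[OF linear_operator_csubspace[OF D_linear]] by blast
  hence aD: "(a (opap G u), m u) \<in> D" by (simp add: r_def)
  have "a (opap G u) - q \<in> Domain (ring_op G)" using rD unfolding r_def by blast
  hence "piBD D (ring_op G) (a (opap G u)) = q" by (rule D_bd.piBD_eqI[OF DomainI[OF aD] q])
  moreover have "(piBD G (ring_op D) u, piBD D (ring_op G) (a (opap G u))) \<in> DtN G D a m"
    unfolding DtN_def using u DomainI[OF aD] opap_eqI[OF D_linear aD] by auto
  ultimately show ?thesis by simp
qed

lemma Domain_converse_DtN_iff: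
  "q \<in> Domain (converse_graph (DtN G D a m)) \<longleftrightarrow>
    q \<in> BD D (ring_op G) \<and> opap D q \<in> T ` Domain G"
proof
  assume "q \<in> Domain (converse_graph (DtN G D a m))"
  then obtain u where u: "u \<in> Domain G" "a (opap G u) \<in> Domain D"
    "m u - opap D (a (opap G u)) = 0" and q: "q = piBD D (ring_op G) (a (opap G u))"
    unfolding converse_graph_def DtN_def by blast
  have "T u = opap D q" unfolding q by (rule T_eq_opap_D_of_DtN[OF u])
  thus "q \<in> BD D (ring_op G) \<and> opap D q \<in> T ` Domain G"
    using D_bd.piBD_mem(1)[OF u(2)] u(1) q by (metis imageI)
next
  assume "q \<in> BD D (ring_op G) \<and> opap D q \<in> T ` Domain G"
  then obtain u where "q \<in> BD D (ring_op G)" "u \<in> Domain G" "T u = opap D q"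
    by (elim conjE imageE) simp
  hence "(piBD G (ring_op D) u, q) \<in> DtN G D a m" by (rule DtN_of_T_eq_opap_D)
  thus "q \<in> Domain (converse_graph (DtN G D a m))" unfolding converse_graph_def by blast
qed

end

theorem proposition5p7:
  fixes G :: "('h0::chilbert \<times> 'h1::chilbert) set"
    and D :: "('h1 \<times> 'h0) set"
    and m :: "'h0 \<Rightarrow> 'h0"
    and a :: "'h1 \<Rightarrow> 'h1"
    and T :: "'h0 \<Rightarrow> 'h0"
  assumes G: "densely_defined_closed G"
    and D: "densely_defined_closed D"
    and GD: "opneg (adj G) \<subseteq> D"
    and m: "cbounded_linear m"
    and a: "cbounded_linear a" "coercive a"
    and T_maps: "\<forall>u\<in>Domain G. T u \<in> Domain G"
    and T_lin: "\<forall>u\<in>Domain G. \<forall>v\<in>Domain G. T (u + v) = T u + T v \<and> (\<forall>c. T (scaleC c u) = scaleC c (T u))"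
    and T_def: "\<forall>u\<in>Domain G. \<forall>v\<in>Domain G.
                 gip G (T u) v = cinner (a (opap G u)) (opap G v) + cinner (m u) v"
    and T_closed_range: "\<forall>x y. (\<forall>n. x n \<in> T ` Domain G) \<longrightarrow> y \<in> Domain G \<longrightarrow>
                 (\<lambda>n. gnorm G (x n - y)) \<longlonglongrightarrow> 0 \<longrightarrow> y \<in> T ` Domain G"
  shows "Domain (converse_graph (DtN G D a m)) =
    {q0 \<in> BD D (ring_op G).
       \<forall>v\<in>ker_adj G D a m. gip G (opap D q0) (piBD G (ring_op D) v) = 0}"
proof -
  interpret DtN_setting G D a m T
    using G D GD m a(1) T_maps T_lin T_def
    by unfold_locales (auto simp: densely_defined_closed_def)
  have "q \<in> Domain (converse_graph (DtN G D a m)) \<longleftrightarrow> q \<in> BD D (ring_op G) \<and>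
      (\<forall>v\<in>ker_adj G D a m. gip G (opap D q) (piBD G (ring_op D) v) = 0)" for q
  proof (cases "q \<in> BD D (ring_op G)")
    case True
    have "opap D q \<in> Domain G"
      using BD_opap_mem_graph[OF G_linear G_closed D_linear G_D True] by blast
    moreover have "gip G (opap D q) (piBD G (ring_op D) v) = gip G (opap D q) v"
      if "v \<in> ker_adj G D a m" for v
      using G_bd.gip_piBD_right[OF BD_opap_mem_BD[OF G_linear G_closed D_linear G_D True]] that
      by (simp add: ker_adj_def)
    ultimately show ?thesis
      using Domain_converse_DtN_iff range_T_iff_orthogonal_ker_adj[OF T_closed_range] True by simp
  qed (simp add: Domain_converse_DtN_iff)
  thus ?thesis by blast
qed

end
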